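(* Let $B,C\subset\mathbb Z^b\times\{0,1\}$ be finite and let $M\in\mathcal M^B_C$ have a left inverse $N\in\mathcal M^C_B$ (i.e. $NM=I_B$). Then: (1) for every $P\in\mathcal M^B_C$ with $|\!|\!| N|\!|\!|_{s_0}|\!|\!| P|\!|\!|_{s_0}\leq1/2$, the matrix $M+P$ has a left inverse $N_P$ satisfying $|\!|\!| N_P|\!|\!|_{s_0}\leq2|\!|\!| N|\!|\!|_{s_0}$ and, for every $s\geq s_0$, $$|\!|\!| N_P|\!|\!|_s\leq\big(1+C(s)|\!|\!| N|\!|\!|_{s_0}|\!|\!| P|\!|\!|_{s_0}\big)|\!|\!| N|\!|\!|_s+C(s)|\!|\!| N|\!|\!|_{s_0}^2|\!|\!| P|\!|\!|_s\leq C(s)\big(|\!|\!| N|\!|\!|_s+|\!|\!| N|\!|\!|_{s_0}^2|\!|\!| P|\!|\!|_s\big),$$ where $C(s)$ is a constant depending only on $s$; (2) for every $P\in\mathcal M^B_C$ with $\|N\|_0\|P\|_0\leq1/2$, the matrix $M+P$ has a left inverse $N_P$ with $\|N_P\|_0\leq2\|N\|_0$.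
   Context: $d,\nu\geq1$, $b=\nu+d$, $s_0>(d+\nu)/2$ fixed. For $n\in\mathbb Z^b$, $|n|=\max_i|n_i|$, $\langle n\rangle=\max(|n|,1)$. For finite $B,C$, $\mathcal M^B_C$ is the space of complex matrices $(M_k^{k'})_{k\in C,k'\in B}$; $\overline B,\overline C$ are the projections on $\mathbb Z^b$; $M_i^{i'}$ is the block with rows $\{(i,a)\in C\}$ and columns $\{(i',a')\in B\}$. A norm $|\cdot|$ is fixed on complex matrices of size at most $2\times2$ with $|UW|\leq|U||W|$ and $|U|\leq|W|$ if $U$ is a submatrix of $W$. $[M(n)]:=\max_{i-i'=n}|M_i^{i'}|$ if $n\in\overline C-\overline B$, $0$ otherwise; $|\!|\!| M|\!|\!|_s^2:=K_0\sum_n[M(n)]^2\langle n\rangle^{2s}$, where $K_0>0$ is a fixed constant independent of $s$ such that the Sobolev norm $\|u\|_s^2=K_0\sum_i|u_i|^2\langle i\rangle^{2s}$ on $\mathbb T^b$ satisfies $\sup|u|\leq\|u\|_{s_0}$ and $\|u_1u_2\|_s\leq\frac12\|u_1\|_{s_0}\|u_2\|_s+\frac{C(s)}2\|u_1\|_s\|u_2\|_{s_0}$ for $s\geq s_0$ with $C(s)\geq 1$, $C(s_0)=1$. $\mathbf H_B$ is the space of vectors indexed by $B$, identified with column matrices, with $\|h\|_0:=|\!|\!| h|\!|\!|_0$, and $\|M\|_0:=\sup_{h\neq0}\|Mh\|_0/\|h\|_0$ is the corresponding operator norm. *)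

theory Defs
  imports "HOL-Analysis.Analysis"
begin

type_synonym 'b idx = "(int ^ 'b) \<times> nat"
type_synonym 'b mat = "'b idx \<Rightarrow> 'b idx \<Rightarrow> complex"

definition supabs :: "int ^ 'b::finite \<Rightarrow> real" where
  "supabs n = real_of_int (Max (range (\<lambda>j. \<bar>n $ j\<bar>)))"

definition jb :: "int ^ 'b::finite \<Rightarrow> real" where
  "jb n = max (supabs n) 1"

text \<open>Block norm: nrm R S f is the norm of the matrix with row labels R, column labels S
  (subsets of {0,1}) and entries f a a'.\<close>
type_synonym blknorm = "nat set \<Rightarrow> nat set \<Rightarrow> (nat \<Rightarrow> nat \<Rightarrow> complex) \<Rightarrow> real"

definition is_block_norm :: "blknorm \<Rightarrow> bool" where
  "is_block_norm nrm \<longleftrightarrow>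
    (\<forall>R S f. R \<subseteq> {0,1} \<longrightarrow> S \<subseteq> {0,1} \<longrightarrow> nrm R S f \<ge> 0) \<and>
    (\<forall>R S f. R \<subseteq> {0,1} \<longrightarrow> S \<subseteq> {0,1} \<longrightarrow>
        (nrm R S f = 0 \<longleftrightarrow> (\<forall>a\<in>R. \<forall>a'\<in>S. f a a' = 0))) \<and>
    (\<forall>R S f g. R \<subseteq> {0,1} \<longrightarrow> S \<subseteq> {0,1} \<longrightarrow>
        (\<forall>a\<in>R. \<forall>a'\<in>S. f a a' = g a a') \<longrightarrow> nrm R S f = nrm R S g) \<and>
    (\<forall>R S f c. R \<subseteq> {0,1} \<longrightarrow> S \<subseteq> {0,1} \<longrightarrow>
        nrm R S (\<lambda>a a'. c * f a a') = cmod c * nrm R S f) \<and>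
    (\<forall>R S f g. R \<subseteq> {0,1} \<longrightarrow> S \<subseteq> {0,1} \<longrightarrow>
        nrm R S (\<lambda>a a'. f a a' + g a a') \<le> nrm R S f + nrm R S g) \<and>
    (\<forall>R S T f g. R \<subseteq> {0,1} \<longrightarrow> S \<subseteq> {0,1} \<longrightarrow> T \<subseteq> {0,1} \<longrightarrow>
        nrm R T (\<lambda>a a''. \<Sum>a'\<in>S. f a a' * g a' a'') \<le> nrm R S f * nrm S T g) \<and>
    (\<forall>R S R' S' f. R \<subseteq> {0,1} \<longrightarrow> S \<subseteq> {0,1} \<longrightarrow> R' \<subseteq> R \<longrightarrow> S' \<subseteq> S \<longrightarrow>
        nrm R' S' f \<le> nrm R S f)"

text \<open>Matrices in M^Cl_Rw: rows indexed by Rw, columns by Cl.\<close>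
definition rowblk :: "'b idx set \<Rightarrow> int ^ 'b \<Rightarrow> nat set" where
  "rowblk X i = {a. (i, a) \<in> X}"

definition bracket :: "blknorm \<Rightarrow> 'b::finite idx set \<Rightarrow> 'b idx set \<Rightarrow> 'b mat \<Rightarrow> int ^ 'b \<Rightarrow> real" where
  "bracket nrm Rw Cl M n =
     Max (insert 0 {nrm (rowblk Rw i) (rowblk Cl i') (\<lambda>a a'. M (i, a) (i', a')) | i i'.
                     i \<in> fst ` Rw \<and> i' \<in> fst ` Cl \<and> i - i' = n})"

definition diffset :: "'b::finite idx set \<Rightarrow> 'b idx set \<Rightarrow> (int ^ 'b) set" where
  "diffset Rw Cl = {i - i' | i i'. i \<in> fst ` Rw \<and> i' \<in> fst ` Cl}"

definition tnorm :: "real \<Rightarrow> blknorm \<Rightarrow> 'b::finite idx set \<Rightarrow> 'b idx set \<Rightarrow> real \<Rightarrow> 'b mat \<Rightarrow> real" where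
  "tnorm K0 nrm Rw Cl s M =
     sqrt (K0 * (\<Sum>n\<in>diffset Rw Cl. (bracket nrm Rw Cl M n)\<^sup>2 * jb n powr (2 * s)))"

text \<open>Vectors of H_X (functions on X) as column matrices with the single column index (0,0).\<close>
definition vnorm0 :: "real \<Rightarrow> blknorm \<Rightarrow> 'b::finite idx set \<Rightarrow> ('b idx \<Rightarrow> complex) \<Rightarrow> real" where
  "vnorm0 K0 nrm X h = tnorm K0 nrm X {(0, 0)} 0 (\<lambda>k k'. h k)"

definition matvec :: "'b idx set \<Rightarrow> 'b mat \<Rightarrow> ('b idx \<Rightarrow> complex) \<Rightarrow> ('b idx \<Rightarrow> complex)" where
  "matvec Cl M h = (\<lambda>k. \<Sum>k'\<in>Cl. M k k' * h k')"

definition opnorm0 :: "real \<Rightarrow> blknorm \<Rightarrow> 'b::finite idx set \<Rightarrow> 'b idx set \<Rightarrow> 'b mat \<Rightarrow> real" where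
  "opnorm0 K0 nrm Rw Cl M =
     Sup (insert 0 {vnorm0 K0 nrm Rw (matvec Cl M h) / vnorm0 K0 nrm Cl h | h.
                    \<exists>k\<in>Cl. h k \<noteq> 0})"

definition left_inv :: "'b idx set \<Rightarrow> 'b idx set \<Rightarrow> 'b mat \<Rightarrow> 'b mat \<Rightarrow> bool" where
  "left_inv B C N M \<longleftrightarrow>
     (\<forall>k\<in>B. \<forall>k'\<in>B. (\<Sum>j\<in>C. N k j * M j k') = (if k = k' then 1 else 0))"

text \<open>Sobolev norm on T^b for trigonometric polynomials (finitely supported Fourier coefficients).\<close>
definition sob_norm :: "real \<Rightarrow> real \<Rightarrow> (int ^ 'b::finite \<Rightarrow> complex) \<Rightarrow> real" where
  "sob_norm K0 s u = sqrt (K0 * (\<Sum>i\<in>{i. u i \<noteq> 0}. (cmod (u i))\<^sup>2 * jb i powr (2 * s)))"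

definition conv :: "(int ^ 'b::finite \<Rightarrow> complex) \<Rightarrow> (int ^ 'b \<Rightarrow> complex) \<Rightarrow> int ^ 'b \<Rightarrow> complex" where
  "conv u v = (\<lambda>i. \<Sum>j\<in>{j. u j \<noteq> 0}. u j * v (i - j))"

definition trig :: "(int ^ 'b::finite \<Rightarrow> complex) \<Rightarrow> real ^ 'b \<Rightarrow> complex" where
  "trig u x = (\<Sum>i\<in>{i. u i \<noteq> 0}.
      u i * exp (\<i> * complex_of_real (\<Sum>j\<in>UNIV. real_of_int (i $ j) * x $ j)))"

definition sobolev_ok :: "real \<Rightarrow> real \<Rightarrow> (real \<Rightarrow> real) \<Rightarrow> 'b::finite itself \<Rightarrow> bool" where
  "sobolev_ok K0 s0 Cs _ \<longleftrightarrow> K0 > 0 \<and> Cs s0 = 1 \<and> (\<forall>s\<ge>s0. Cs s \<ge> 1) \<and>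
    (\<forall>u::int ^ 'b \<Rightarrow> complex. finite {i. u i \<noteq> 0} \<longrightarrow>
        (\<forall>x. cmod (trig u x) \<le> sob_norm K0 s0 u)) \<and>
    (\<forall>(u1::int ^ 'b \<Rightarrow> complex) u2 s. finite {i. u1 i \<noteq> 0} \<longrightarrow> finite {i. u2 i \<noteq> 0} \<longrightarrow>
        s \<ge> s0 \<longrightarrow>
        sob_norm K0 s (conv u1 u2) \<le> 1/2 * sob_norm K0 s0 u1 * sob_norm K0 s u2
                                      + Cs s / 2 * sob_norm K0 s u1 * sob_norm K0 s0 u2)"

end

theory Submission
  imports
    "Jordan_Normal_Form.Determinant"
    Defs  (* imported last, so that mat is the type synonym of Defs and not Matrix.mat *)
begin

text \<open>
  Put A = N P. Under either smallness hypothesis, A contracts the relevant norm of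
  vectors on B (|||.|||_s0 through the algebra property of |||.|||_s0, resp. ||.||_0
  through the operator norms), so I + A is injective and hence, B being finite,
  invertible. Then N_P = (I + A)^(-1) N is a left inverse of M + P and solves
  the fixed-point equation N_P = N - N P N_P. Taking |||.|||_s0 norms in this equation
  gives |||N_P|||_s0 \<le> |||N|||_s0 + |||N|||_s0 |||P|||_s0 |||N_P|||_s0, hence the
  factor 2; applying the tame product estimate twice at level s \<ge> s0 and absorbing
  the term in |||N_P|||_s gives the tame bound with C(s) replaced by 2 Cs s.
  Part (2) is the same argument for the operator norm ||.||_0.
\<close>

section \<open>Block norms and the brackets [M(n)]\<close>

lemma block_norm_nonneg:
  "is_block_norm nrm \<Longrightarrow> R \<subseteq> {0,1} \<Longrightarrow> S \<subseteq> {0,1} \<Longrightarrow> nrm R S f \<ge> 0"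
  by (simp add: is_block_norm_def)

lemma block_norm_eq_0_iff:
  "is_block_norm nrm \<Longrightarrow> R \<subseteq> {0,1} \<Longrightarrow> S \<subseteq> {0,1} \<Longrightarrow>
    nrm R S f = 0 \<longleftrightarrow> (\<forall>a\<in>R. \<forall>a'\<in>S. f a a' = 0)"
  by (simp add: is_block_norm_def)

lemma block_norm_cong:
  "is_block_norm nrm \<Longrightarrow> R \<subseteq> {0,1} \<Longrightarrow> S \<subseteq> {0,1} \<Longrightarrow>
    (\<And>a a'. a \<in> R \<Longrightarrow> a' \<in> S \<Longrightarrow> f a a' = g a a') \<Longrightarrow> nrm R S f = nrm R S g"
  by (simp add: is_block_norm_def)

lemma block_norm_scale:
  "is_block_norm nrm \<Longrightarrow> R \<subseteq> {0,1} \<Longrightarrow> S \<subseteq> {0,1} \<Longrightarrow>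
    nrm R S (\<lambda>a a'. c * f a a') = cmod c * nrm R S f"
  by (simp add: is_block_norm_def)

lemma block_norm_add:
  "is_block_norm nrm \<Longrightarrow> R \<subseteq> {0,1} \<Longrightarrow> S \<subseteq> {0,1} \<Longrightarrow>
    nrm R S (\<lambda>a a'. f a a' + g a a') \<le> nrm R S f + nrm R S g"
  by (simp add: is_block_norm_def)

lemma block_norm_mult:
  "is_block_norm nrm \<Longrightarrow> R \<subseteq> {0,1} \<Longrightarrow> S \<subseteq> {0,1} \<Longrightarrow> T \<subseteq> {0,1} \<Longrightarrow>
    nrm R T (\<lambda>a a''. \<Sum>a'\<in>S. f a a' * g a' a'') \<le> nrm R S f * nrm S T g"
  by (simp add: is_block_norm_def)

lemma block_norm_diff:
  assumes "is_block_norm nrm" "R \<subseteq> {0,1}" "S \<subseteq> {0,1}"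
  shows "nrm R S (\<lambda>a a'. f a a' - g a a') \<le> nrm R S f + nrm R S g"
  using block_norm_add[OF assms, of f "\<lambda>a a'. (-1) * g a a'"]
    block_norm_scale[OF assms, of "-1" g]
  by simp

lemma block_norm_sum:
  assumes "is_block_norm nrm" "R \<subseteq> {0,1}" "S \<subseteq> {0,1}"
  shows "nrm R S (\<lambda>a a'. \<Sum>x\<in>I. F x a a') \<le> (\<Sum>x\<in>I. nrm R S (F x))"
proof (induction I rule: infinite_finite_induct)
  case (infinite I)
  then show ?case using block_norm_eq_0_iff[OF assms, of "\<lambda>a a'. 0"] by simp
next
  case empty
  then show ?case using block_norm_eq_0_iff[OF assms, of "\<lambda>a a'. 0"] by simp
next
  case (insert x I)
  then show ?case
    using block_norm_add[OF assms, of "F x" "\<lambda>a a'. \<Sum>x\<in>I. F x a a'"] by simp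
qed

lemma rowblk_subset: "X \<subseteq> UNIV \<times> {0,1} \<Longrightarrow> rowblk X i \<subseteq> {0,1}"
  unfolding rowblk_def by auto

lemma finite_diffset:
  assumes "finite Rw" "finite Cl"
  shows "finite (diffset Rw Cl)"
proof -
  have "diffset Rw Cl = (\<lambda>(i, i'). i - i') ` (fst ` Rw \<times> fst ` Cl)"
    unfolding diffset_def by auto
  then show ?thesis using assms by simp
qed

lemma finite_bracket_candidates:
  assumes "finite Rw" "finite Cl"
  shows "finite (insert 0 {nrm (rowblk Rw i) (rowblk Cl i') (\<lambda>a a'. M (i, a) (i', a')) | i i'.
                            i \<in> fst ` Rw \<and> i' \<in> fst ` Cl \<and> i - i' = n})"
proof -
  have "{nrm (rowblk Rw i) (rowblk Cl i') (\<lambda>a a'. M (i, a) (i', a')) | i i'.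
            i \<in> fst ` Rw \<and> i' \<in> fst ` Cl \<and> i - i' = n}
      \<subseteq> (\<lambda>(i, i'). nrm (rowblk Rw i) (rowblk Cl i') (\<lambda>a a'. M (i, a) (i', a'))) ` (fst ` Rw \<times> fst ` Cl)"
    by auto
  then show ?thesis using assms by (simp add: finite_subset)
qed

lemma bracket_nonneg: "finite Rw \<Longrightarrow> finite Cl \<Longrightarrow> bracket nrm Rw Cl M n \<ge> 0"
  unfolding bracket_def by (rule Max_ge[OF finite_bracket_candidates insertI1])

lemma block_le_bracket:
  assumes "finite Rw" "finite Cl" "i \<in> fst ` Rw" "i' \<in> fst ` Cl"
  shows "nrm (rowblk Rw i) (rowblk Cl i') (\<lambda>a a'. M (i, a) (i', a')) \<le> bracket nrm Rw Cl M (i - i')"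
  unfolding bracket_def by (rule Max_ge[OF finite_bracket_candidates[OF assms(1,2)]]) (use assms in blast)

lemma bracket_leI:
  assumes "finite Rw" "finite Cl" "c \<ge> 0"
    and "\<And>i i'. i \<in> fst ` Rw \<Longrightarrow> i' \<in> fst ` Cl \<Longrightarrow> i - i' = n \<Longrightarrow>
           nrm (rowblk Rw i) (rowblk Cl i') (\<lambda>a a'. M (i, a) (i', a')) \<le> c"
  shows "bracket nrm Rw Cl M n \<le> c"
  unfolding bracket_def
  by (rule Max.boundedI[OF finite_bracket_candidates[OF assms(1,2)]]) (use assms(3,4) in auto)

lemma bracket_eq_0_outside:
  assumes "n \<notin> diffset Rw Cl"
  shows "bracket nrm Rw Cl M n = 0"
proof -
  have no_blocks: "{nrm (rowblk Rw i) (rowblk Cl i') (\<lambda>a a'. M (i, a) (i', a')) | i i'.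
          i \<in> fst ` Rw \<and> i' \<in> fst ` Cl \<and> i - i' = n} = {}"
    using assms unfolding diffset_def by auto
  show ?thesis unfolding bracket_def no_blocks by simp
qed

lemma bracket_support_subset: "{n. bracket nrm Rw Cl M n \<noteq> 0} \<subseteq> diffset Rw Cl"
  using bracket_eq_0_outside by blast

lemma finite_bracket_support: "finite Rw \<Longrightarrow> finite Cl \<Longrightarrow> finite {n. bracket nrm Rw Cl M n \<noteq> 0}"
  by (rule finite_subset[OF bracket_support_subset finite_diffset])

lemma bracket_cong:
  assumes "is_block_norm nrm" "Rw \<subseteq> UNIV \<times> {0,1}" "Cl \<subseteq> UNIV \<times> {0,1}"
    and "\<And>k k'. k \<in> Rw \<Longrightarrow> k' \<in> Cl \<Longrightarrow> X k k' = Y k k'"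
  shows "bracket nrm Rw Cl X = bracket nrm Rw Cl Y"
proof -
  have "nrm (rowblk Rw i) (rowblk Cl i') (\<lambda>a a'. X (i, a) (i', a'))
      = nrm (rowblk Rw i) (rowblk Cl i') (\<lambda>a a'. Y (i, a) (i', a'))" for i i'
    by (rule block_norm_cong[OF assms(1) rowblk_subset rowblk_subset])
       (use assms in \<open>auto simp: rowblk_def\<close>)
  then show ?thesis unfolding bracket_def by simp
qed

lemma bracket_diff:
  assumes nrm: "is_block_norm nrm" and fin: "finite Rw" "finite Cl"
    and sub: "Rw \<subseteq> UNIV \<times> {0,1}" "Cl \<subseteq> UNIV \<times> {0,1}"
  shows "bracket nrm Rw Cl (\<lambda>k k'. X k k' - Y k k') n \<le> bracket nrm Rw Cl X n + bracket nrm Rw Cl Y n"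
proof (rule bracket_leI[OF fin])
  show "0 \<le> bracket nrm Rw Cl X n + bracket nrm Rw Cl Y n"
    using bracket_nonneg[OF fin] by (simp add: add_nonneg_nonneg)
next
  fix i i' assume i: "i \<in> fst ` Rw" "i' \<in> fst ` Cl" "i - i' = n"
  show "nrm (rowblk Rw i) (rowblk Cl i') (\<lambda>a a'. X (i, a) (i', a') - Y (i, a) (i', a'))
      \<le> bracket nrm Rw Cl X n + bracket nrm Rw Cl Y n"
    using block_norm_diff[OF nrm rowblk_subset[OF sub(1)] rowblk_subset[OF sub(2)],
        of i i' "\<lambda>a a'. X (i, a) (i', a')" "\<lambda>a a'. Y (i, a) (i', a')"]
      block_le_bracket[OF fin i(1,2), of nrm X] block_le_bracket[OF fin i(1,2), of nrm Y] i(3)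
    by simp
qed

section \<open>The norms |||M|||_s\<close>

lemma jb_ge_1: "jb n \<ge> 1"
  unfolding jb_def by simp

lemma jb_nonzero: "jb n \<noteq> 0"
  using jb_ge_1[of n] by linarith

lemma tnorm_nonneg: "K0 \<ge> 0 \<Longrightarrow> tnorm K0 nrm Rw Cl s M \<ge> 0"
  unfolding tnorm_def by (simp add: sum_nonneg)

lemma tnorm_eq_L2_set:
  assumes "K0 \<ge> 0"
  shows "tnorm K0 nrm Rw Cl s M
       = sqrt K0 * L2_set (\<lambda>n. bracket nrm Rw Cl M n * jb n powr s) (diffset Rw Cl)"
proof -
  have "(bracket nrm Rw Cl M n * jb n powr s)\<^sup>2 = (bracket nrm Rw Cl M n)\<^sup>2 * jb n powr (2 * s)" for n
    by (simp add: power_mult_distrib powr_powr[symmetric] powr_realpow[symmetric] mult.commute)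
  then show ?thesis unfolding tnorm_def L2_set_def by (simp add: real_sqrt_mult)
qed

lemma tnorm_cong:
  assumes "is_block_norm nrm" "Rw \<subseteq> UNIV \<times> {0,1}" "Cl \<subseteq> UNIV \<times> {0,1}"
    and "\<And>k k'. k \<in> Rw \<Longrightarrow> k' \<in> Cl \<Longrightarrow> X k k' = Y k k'"
  shows "tnorm K0 nrm Rw Cl s X = tnorm K0 nrm Rw Cl s Y"
  using bracket_cong[OF assms] unfolding tnorm_def by simp

lemma tnorm_diff:
  assumes K0: "K0 \<ge> 0" and nrm: "is_block_norm nrm" and fin: "finite Rw" "finite Cl"
    and sub: "Rw \<subseteq> UNIV \<times> {0,1}" "Cl \<subseteq> UNIV \<times> {0,1}"
  shows "tnorm K0 nrm Rw Cl s (\<lambda>k k'. X k k' - Y k k') \<le> tnorm K0 nrm Rw Cl s X + tnorm K0 nrm Rw Cl s Y"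
proof -
  let ?w = "\<lambda>M n. bracket nrm Rw Cl M n * jb n powr s"
  have "L2_set (?w (\<lambda>k k'. X k k' - Y k k')) (diffset Rw Cl)
      \<le> L2_set (\<lambda>n. ?w X n + ?w Y n) (diffset Rw Cl)"
    using bracket_diff[OF nrm fin sub] bracket_nonneg[OF fin]
    by (intro L2_set_mono) (simp_all add: mult_right_mono flip: distrib_right)
  also have "\<dots> \<le> L2_set (?w X) (diffset Rw Cl) + L2_set (?w Y) (diffset Rw Cl)"
    by (rule L2_set_triangle_ineq)
  finally show ?thesis
    unfolding tnorm_eq_L2_set[OF K0] using K0 by (simp flip: distrib_left add: mult_left_mono)
qed

lemma tnorm_eq_0:
  assumes nrm: "is_block_norm nrm" and fin: "finite Rw" "finite Cl"
    and sub: "Rw \<subseteq> UNIV \<times> {0,1}" "Cl \<subseteq> UNIV \<times> {0,1}"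
    and zero: "\<And>k k'. k \<in> Rw \<Longrightarrow> k' \<in> Cl \<Longrightarrow> X k k' = 0"
  shows "tnorm K0 nrm Rw Cl s X = 0"
proof -
  have "bracket nrm Rw Cl X n \<le> 0" for n
  proof (rule bracket_leI[OF fin order.refl])
    fix i i'
    have "nrm (rowblk Rw i) (rowblk Cl i') (\<lambda>a a'. X (i, a) (i', a')) = 0"
      using zero by (subst block_norm_eq_0_iff[OF nrm rowblk_subset[OF sub(1)] rowblk_subset[OF sub(2)]])
        (simp add: rowblk_def)
    then show "nrm (rowblk Rw i) (rowblk Cl i') (\<lambda>a a'. X (i, a) (i', a')) \<le> 0" by simp
  qed
  then have "bracket nrm Rw Cl X n = 0" for n
    using bracket_nonneg[OF fin, of nrm X n] by (meson order.antisym)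
  then show ?thesis unfolding tnorm_def by simp
qed

lemma tnorm_le_0_imp_eq_0:
  assumes K0: "K0 > 0" and nrm: "is_block_norm nrm" and fin: "finite Rw" "finite Cl"
    and sub: "Rw \<subseteq> UNIV \<times> {0,1}" "Cl \<subseteq> UNIV \<times> {0,1}"
    and le: "tnorm K0 nrm Rw Cl s X \<le> 0" and k: "(i, a) \<in> Rw" "(i', a') \<in> Cl"
  shows "X (i, a) (i', a') = 0"
proof -
  let ?f = "\<lambda>n. (bracket nrm Rw Cl X n)\<^sup>2 * jb n powr (2 * s)"
  have "(\<Sum>n\<in>diffset Rw Cl. ?f n) = 0"
    using le tnorm_nonneg[of K0 nrm Rw Cl s X] K0 unfolding tnorm_def by simp
  moreover have "i - i' \<in> diffset Rw Cl" using k unfolding diffset_def by force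
  ultimately have "?f (i - i') = 0"
    using sum_nonneg_eq_0_iff[OF finite_diffset[OF fin], of ?f] by simp
  then have "bracket nrm Rw Cl X (i - i') = 0" using jb_ge_1[of "i - i'"] by simp
  moreover have ii: "i \<in> fst ` Rw" "i' \<in> fst ` Cl" using k by force+
  ultimately have "nrm (rowblk Rw i) (rowblk Cl i') (\<lambda>a a'. X (i, a) (i', a')) = 0"
    using block_le_bracket[OF fin ii, of nrm X]
      block_norm_nonneg[OF nrm rowblk_subset[OF sub(1)] rowblk_subset[OF sub(2)],
        of i i' "\<lambda>a a'. X (i, a) (i', a')"]
    by simp
  then show ?thesis
    using block_norm_eq_0_iff[OF nrm rowblk_subset[OF sub(1)] rowblk_subset[OF sub(2)]] k
    by (auto simp: rowblk_def)
qed

lemma tnorm_eq_sob_norm: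
  assumes "finite Rw" "finite Cl"
  shows "tnorm K0 nrm Rw Cl s M = sob_norm K0 s (\<lambda>n. complex_of_real (bracket nrm Rw Cl M n))"
proof -
  have "(\<Sum>n\<in>diffset Rw Cl. (bracket nrm Rw Cl M n)\<^sup>2 * jb n powr (2 * s))
      = (\<Sum>n\<in>{n. bracket nrm Rw Cl M n \<noteq> 0}. (bracket nrm Rw Cl M n)\<^sup>2 * jb n powr (2 * s))"
    by (rule sum.mono_neutral_right[OF finite_diffset[OF assms] bracket_support_subset]) simp
  then show ?thesis unfolding tnorm_def sob_norm_def by simp
qed

lemma tnorm_mono:
  assumes "K0 \<ge> 0" "s \<le> s'"
  shows "tnorm K0 nrm Rw Cl s M \<le> tnorm K0 nrm Rw Cl s' M"
proof -
  have "jb n powr (2 * s) \<le> jb n powr (2 * s')" for n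
    using assms(2) jb_ge_1 by (intro powr_mono) simp_all
  then show ?thesis
    unfolding tnorm_def using assms(1)
    by (intro real_sqrt_le_mono mult_left_mono sum_mono) (simp_all add: mult_left_mono)
qed

lemma tnorm_le_tnorm_0:
  assumes "K0 \<ge> 0" "finite (diffset Rw Cl)"
  shows "tnorm K0 nrm Rw Cl s M \<le> sqrt (\<Sum>n\<in>diffset Rw Cl. jb n powr (2 * s)) * tnorm K0 nrm Rw Cl 0 M"
proof -
  let ?W = "\<Sum>n\<in>diffset Rw Cl. jb n powr (2 * s)"
  have "(\<Sum>n\<in>diffset Rw Cl. (bracket nrm Rw Cl M n)\<^sup>2 * jb n powr (2 * s))
      \<le> (\<Sum>n\<in>diffset Rw Cl. (bracket nrm Rw Cl M n)\<^sup>2 * ?W)"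
    using assms(2) by (intro sum_mono mult_left_mono member_le_sum) simp_all
  also have "\<dots> = (\<Sum>n\<in>diffset Rw Cl. (bracket nrm Rw Cl M n)\<^sup>2) * ?W"
    by (rule sum_distrib_right[symmetric])
  finally have "K0 * (\<Sum>n\<in>diffset Rw Cl. (bracket nrm Rw Cl M n)\<^sup>2 * jb n powr (2 * s))
      \<le> ?W * (K0 * (\<Sum>n\<in>diffset Rw Cl. (bracket nrm Rw Cl M n)\<^sup>2))"
    using assms(1) by (simp add: mult_left_mono mult_ac)
  then show ?thesis
    unfolding tnorm_def by (simp flip: real_sqrt_mult add: real_sqrt_le_mono jb_nonzero)
qed

section \<open>Matrix products and left inverses\<close>

definition mmul :: "'j set \<Rightarrow> ('i \<Rightarrow> 'j \<Rightarrow> 'a::comm_semiring_0) \<Rightarrow> ('j \<Rightarrow> 'k \<Rightarrow> 'a) \<Rightarrow> 'i \<Rightarrow> 'k \<Rightarrow> 'a"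
  where "mmul Mid X Y = (\<lambda>k k''. \<Sum>k'\<in>Mid. X k k' * Y k' k'')"

lemma mmul_assoc: "mmul Mid' (mmul Mid X Y) Z = mmul Mid X (mmul Mid' Y Z)"
  unfolding mmul_def
  by (simp add: sum_distrib_left sum_distrib_right mult.assoc sum.swap[of _ Mid'])

lemma mmul_cong_left:
  "(\<And>j. j \<in> Mid \<Longrightarrow> X k j = X' k j) \<Longrightarrow> mmul Mid X Y k c = mmul Mid X' Y k c"
  unfolding mmul_def by simp

lemma mmul_cong_right:
  "(\<And>j. j \<in> Mid \<Longrightarrow> Y j c = Y' j c) \<Longrightarrow> mmul Mid X Y k c = mmul Mid X Y' k c"
  unfolding mmul_def by simp

lemma mmul_delta_left:
  fixes Y :: "'a \<Rightarrow> 'c \<Rightarrow> 'r::comm_semiring_1"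
  assumes "finite B" "k \<in> B"
  shows "mmul B (\<lambda>i j. if i = j then 1 else 0) Y k c = Y k c"
proof -
  have "mmul B (\<lambda>i j. if i = j then 1 else 0) Y k c = (\<Sum>j\<in>B. if k = j then Y j c else 0)"
    unfolding mmul_def by (rule sum.cong) simp_all
  then show ?thesis using assms by simp
qed

lemma mmul_id_plus:
  fixes Y :: "'a \<Rightarrow> 'c \<Rightarrow> 'r::comm_semiring_1"
  assumes "finite B" "k \<in> B"
  shows "mmul B (\<lambda>i j. (if i = j then 1 else 0) + A i j) Y k c = Y k c + mmul B A Y k c"
  using mmul_delta_left[OF assms, of Y c] unfolding mmul_def by (simp add: distrib_right sum.distrib)

lemma matvec_eq_mmul: "(\<lambda>k k'. matvec Cl X h k) = mmul Cl X (\<lambda>k k'. h k)"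
  unfolding matvec_def mmul_def by simp

lemma matvec_mmul: "matvec B (mmul C N P) x = matvec C N (matvec B P x)"
  unfolding matvec_def mmul_def
  by (simp add: sum_distrib_left sum_distrib_right mult.assoc sum.swap[of _ B])

lemma left_inv_iff_mmul:
  "left_inv B C N M \<longleftrightarrow> (\<forall>k\<in>B. \<forall>k'\<in>B. mmul C N M k k' = (if k = k' then 1 else 0))"
  unfolding left_inv_def mmul_def ..

text \<open>Proved by enumerating B and passing to a square matrix of Jordan_Normal_Form:
  injectivity makes its determinant nonzero, so it is a unit of the matrix ring.\<close>

lemma injective_imp_invertible:
  fixes T :: "'a \<Rightarrow> 'a \<Rightarrow> 'f::field"
  assumes fin: "finite B"
    and inj: "\<And>x. \<forall>k\<in>B. (\<Sum>j\<in>B. T k j * x j) = 0 \<Longrightarrow> \<forall>k\<in>B. x k = 0"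
  shows "\<exists>R. \<forall>k\<in>B. \<forall>k'\<in>B. mmul B R T k k' = (if k = k' then 1 else 0)
                          \<and> mmul B T R k k' = (if k = k' then 1 else 0)"
proof -
  define n where "n = card B"
  obtain e where e: "bij_betw e {..<n} B"
    using ex_bij_betw_nat_finite[OF fin] unfolding n_def atLeast0LessThan by blast
  define f where "f = the_inv_into {..<n} e"
  have f: "bij_betw f B {..<n}" unfolding f_def by (rule bij_betw_the_inv_into[OF e])
  have f_less: "f k < n" if "k \<in> B" for k
    using bij_betw_apply[OF f that] by simp
  have fe: "f (e i) = i" if "i < n" for i
    unfolding f_def using e that by (simp add: bij_betw_def the_inv_into_f_f)
  have ef: "e (f k) = k" if "k \<in> B" for k
    unfolding f_def using e that by (simp add: f_the_inv_into_f_bij_betw)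
  have reindex: "(\<Sum>j\<in>B. g j) = (\<Sum>i<n. g (e i))" for g :: "'a \<Rightarrow> 'f"
    by (rule sum.reindex_bij_betw[OF e, symmetric])
  define A :: "'f Matrix.mat" where "A = Matrix.mat n n (\<lambda>(i, j). T (e i) (e j))"
  have A: "A \<in> carrier_mat n n" unfolding A_def by simp
  have "Determinant.det A \<noteq> 0"
  proof
    assume "Determinant.det A = 0"
    then obtain v where v: "v \<in> carrier_vec n" "v \<noteq> 0\<^sub>v n" "A *\<^sub>v v = 0\<^sub>v n"
      using det_0_iff_vec_prod_zero_field[OF A] by blast
    have "\<forall>k\<in>B. (\<Sum>j\<in>B. T k j * v $ f j) = 0"
    proof
      fix k assume k: "k \<in> B"
      have "f k < n" using f_less[OF k] .
      then have "(A *\<^sub>v v) $ f k = (\<Sum>i<n. T k (e i) * v $ i)"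
        using v(1) ef[OF k] by (simp add: A_def scalar_prod_def atLeast0LessThan)
      then show "(\<Sum>j\<in>B. T k j * v $ f j) = 0"
        using v(3) \<open>f k < n\<close> by (simp add: reindex fe)
    qed
    then have "v $ i = 0" if "i < n" for i
      using inj e that fe by (metis bij_betwE lessThan_iff)
    then have "v = 0\<^sub>v n" using v(1) by (intro eq_vecI) auto
    with v(2) show False ..
  qed
  then obtain Q where Q: "Q \<in> carrier_mat n n" "Q * A = 1\<^sub>m n" "A * Q = 1\<^sub>m n"
    using det_non_zero_imp_unit[OF A, of undefined] unfolding Units_def ring_mat_def by auto
  define R where "R k k' = Q $$ (f k, f k')" for k k'
  have entry: "(Q * A) $$ (f k, f k') = mmul B R T k k'" "(A * Q) $$ (f k, f k') = mmul B T R k k'"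
    if "k \<in> B" "k' \<in> B" for k k'
  proof -
    have "f k < n" "f k' < n" using f_less that by simp_all
    then show "(Q * A) $$ (f k, f k') = mmul B R T k k'" "(A * Q) $$ (f k, f k') = mmul B T R k k'"
      using Q(1) that
      by (simp_all add: A_def R_def mmul_def reindex fe ef scalar_prod_def atLeast0LessThan)
  qed
  have "f k = f k' \<longleftrightarrow> k = k'" if "k \<in> B" "k' \<in> B" for k k'
    using ef that by metis
  then show ?thesis
    using Q(2,3) entry f_less by (intro exI[of _ R]) (auto simp flip: entry)
qed

text \<open>N_P is (I + N P)^(-1) N; the second conjunct is (I + N P) N_P = N.\<close>

lemma perturbed_left_inverse:
  fixes M N P :: "'a \<Rightarrow> 'a \<Rightarrow> 'f::field"
  assumes fin: "finite B"
    and left_inv: "\<forall>k\<in>B. \<forall>k'\<in>B. mmul C N M k k' = (if k = k' then 1 else 0)"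
    and inj: "\<And>x. \<forall>k\<in>B. x k + (\<Sum>j\<in>B. mmul C N P k j * x j) = 0 \<Longrightarrow> \<forall>k\<in>B. x k = 0"
  shows "\<exists>NP. (\<forall>k\<in>B. \<forall>k'\<in>B. mmul C NP (\<lambda>j k'. M j k' + P j k') k k' = (if k = k' then 1 else 0))
           \<and> (\<forall>k\<in>B. \<forall>c. NP k c = N k c - mmul C N (mmul B P NP) k c)"
proof -
  define T where "T i j = (if i = j then 1 else 0) + mmul C N P i j" for i j
  have T_inj: "\<forall>k\<in>B. x k = 0" if "\<forall>k\<in>B. (\<Sum>j\<in>B. T k j * x j) = 0" for x
  proof (rule inj)
    have "(\<Sum>j\<in>B. T k j * x j) = x k + (\<Sum>j\<in>B. mmul C N P k j * x j)" if "k \<in> B" for k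
      using mmul_id_plus[OF fin that, of "mmul C N P" "\<lambda>j _. x j" undefined]
      unfolding T_def mmul_def[of B] .
    then show "\<forall>k\<in>B. x k + (\<Sum>j\<in>B. mmul C N P k j * x j) = 0" using that by simp
  qed
  obtain R where R: "\<forall>k\<in>B. \<forall>k'\<in>B. mmul B R T k k' = (if k = k' then 1 else 0)
                                    \<and> mmul B T R k k' = (if k = k' then 1 else 0)"
    using injective_imp_invertible[OF fin T_inj] by blast
  define NP where "NP = mmul B R N"
  have "mmul C NP (\<lambda>j k'. M j k' + P j k') k k' = mmul B R T k k'" if "k' \<in> B" for k k'
  proof -
    have "mmul C N (\<lambda>j k'. M j k' + P j k') j k' = T j k'" if "j \<in> B" for j
      using left_inv that \<open>k' \<in> B\<close> unfolding T_def by (simp add: mmul_def distrib_left sum.distrib)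
    then show ?thesis unfolding NP_def mmul_assoc by (rule mmul_cong_right)
  qed
  moreover have "NP k c = N k c - mmul C N (mmul B P NP) k c" if k: "k \<in> B" for k c
  proof -
    have "mmul B T NP k c = mmul B (mmul B T R) N k c" unfolding NP_def mmul_assoc ..
    also have "\<dots> = mmul B (\<lambda>i j. if i = j then 1 else 0) N k c"
      using R k by (intro mmul_cong_left) simp
    also have "\<dots> = N k c" by (rule mmul_delta_left[OF fin k])
    finally have "mmul B T NP k c = N k c" .
    moreover have "mmul B T NP k c = NP k c + mmul C N (mmul B P NP) k c"
      unfolding T_def mmul_id_plus[OF fin k] mmul_assoc ..
    ultimately show ?thesis by (simp add: algebra_simps)
  qed
  ultimately show ?thesis using R by (intro exI[of _ NP]) simp
qed

section \<open>The tame product estimate\<close>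

lemma sobolev_ok_K0_pos: "sobolev_ok K0 s0 Cs TYPE('b::finite) \<Longrightarrow> K0 > 0"
  by (simp add: sobolev_ok_def)

lemma sobolev_ok_Cs_s0: "sobolev_ok K0 s0 Cs TYPE('b::finite) \<Longrightarrow> Cs s0 = 1"
  by (simp add: sobolev_ok_def)

lemma sobolev_ok_Cs_ge_1: "sobolev_ok K0 s0 Cs TYPE('b::finite) \<Longrightarrow> s \<ge> s0 \<Longrightarrow> Cs s \<ge> 1"
  by (simp add: sobolev_ok_def)

lemma sob_norm_conv_le:
  fixes u v :: "int ^ 'b::finite \<Rightarrow> complex"
  assumes "sobolev_ok K0 s0 Cs TYPE('b)" "finite {i. u i \<noteq> 0}" "finite {i. v i \<noteq> 0}" "s \<ge> s0"
  shows "sob_norm K0 s (conv u v)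
      \<le> 1/2 * sob_norm K0 s0 u * sob_norm K0 s v + Cs s / 2 * sob_norm K0 s u * sob_norm K0 s0 v"
  using assms unfolding sobolev_ok_def by blast

lemma block_mmul_le:
  assumes nrm: "is_block_norm nrm" and fin: "finite Rw" "finite Mid" "finite Cl"
    and sub: "Rw \<subseteq> UNIV \<times> {0,1}" "Mid \<subseteq> UNIV \<times> {0,1}" "Cl \<subseteq> UNIV \<times> {0,1}"
    and i: "i \<in> fst ` Rw" "i'' \<in> fst ` Cl"
  shows "nrm (rowblk Rw i) (rowblk Cl i'') (\<lambda>a a''. mmul Mid X Y (i, a) (i'', a''))
     \<le> (\<Sum>i'\<in>fst ` Mid. bracket nrm Rw Mid X (i - i') * bracket nrm Mid Cl Y (i' - i''))"
proof -
  let ?R = "rowblk Rw i" and ?T = "rowblk Cl i''"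
  have R: "?R \<subseteq> {0,1}" and T: "?T \<subseteq> {0,1}" using rowblk_subset sub by auto
  have Mid_Sigma: "Mid = (SIGMA i':fst ` Mid. rowblk Mid i')"
    by (force simp: rowblk_def)
  have "mmul Mid X Y (i, a) (i'', a'')
      = (\<Sum>i'\<in>fst ` Mid. \<Sum>a'\<in>rowblk Mid i'. X (i, a) (i', a') * Y (i', a') (i'', a''))" for a a''
    unfolding mmul_def using fin(2) finite_subset[OF rowblk_subset[OF sub(2)]]
    by (subst Mid_Sigma, subst sum.Sigma) (simp_all add: case_prod_beta)
  then have "nrm ?R ?T (\<lambda>a a''. mmul Mid X Y (i, a) (i'', a''))
      \<le> (\<Sum>i'\<in>fst ` Mid. nrm ?R ?T (\<lambda>a a''. \<Sum>a'\<in>rowblk Mid i'. X (i, a) (i', a') * Y (i', a') (i'', a'')))"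
    using block_norm_sum[OF nrm R T] by simp
  also have "\<dots> \<le> (\<Sum>i'\<in>fst ` Mid. bracket nrm Rw Mid X (i - i') * bracket nrm Mid Cl Y (i' - i''))"
  proof (rule sum_mono)
    fix i' assume i': "i' \<in> fst ` Mid"
    have S: "rowblk Mid i' \<subseteq> {0,1}" using rowblk_subset sub by auto
    have "nrm ?R ?T (\<lambda>a a''. \<Sum>a'\<in>rowblk Mid i'. X (i, a) (i', a') * Y (i', a') (i'', a''))
       \<le> nrm ?R (rowblk Mid i') (\<lambda>a a'. X (i, a) (i', a')) * nrm (rowblk Mid i') ?T (\<lambda>a' a''. Y (i', a') (i'', a''))"
      by (rule block_norm_mult[OF nrm R S T])
    also have "\<dots> \<le> bracket nrm Rw Mid X (i - i') * bracket nrm Mid Cl Y (i' - i'')"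
      by (intro mult_mono block_le_bracket bracket_nonneg block_norm_nonneg[OF nrm S T] fin i i')
    finally show "nrm ?R ?T (\<lambda>a a''. \<Sum>a'\<in>rowblk Mid i'. X (i, a) (i', a') * Y (i', a') (i'', a''))
       \<le> bracket nrm Rw Mid X (i - i') * bracket nrm Mid Cl Y (i' - i'')" .
  qed
  finally show ?thesis .
qed

lemma bracket_mmul_le:
  assumes nrm: "is_block_norm nrm" and fin: "finite Rw" "finite Mid" "finite Cl"
    and sub: "Rw \<subseteq> UNIV \<times> {0,1}" "Mid \<subseteq> UNIV \<times> {0,1}" "Cl \<subseteq> UNIV \<times> {0,1}"
  shows "bracket nrm Rw Cl (mmul Mid X Y) n
     \<le> (\<Sum>j\<in>{j. bracket nrm Rw Mid X j \<noteq> 0}. bracket nrm Rw Mid X j * bracket nrm Mid Cl Y (n - j))"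
    (is "_ \<le> ?c")
proof (rule bracket_leI[OF fin(1,3)])
  let ?a = "bracket nrm Rw Mid X" and ?b = "bracket nrm Mid Cl Y"
  have nonneg: "0 \<le> ?a j * ?b (n - j)" for j
    using bracket_nonneg[OF fin(1,2)] bracket_nonneg[OF fin(2,3)] by simp
  then show "0 \<le> ?c" by (simp add: sum_nonneg)
  fix i i'' assume i: "i \<in> fst ` Rw" "i'' \<in> fst ` Cl" "i - i'' = n"
  have "nrm (rowblk Rw i) (rowblk Cl i'') (\<lambda>a a''. mmul Mid X Y (i, a) (i'', a''))
     \<le> (\<Sum>i'\<in>fst ` Mid. ?a (i - i') * ?b (i' - i''))"
    by (rule block_mmul_le[OF nrm fin sub i(1,2)])
  also have "\<dots> = (\<Sum>j\<in>(\<lambda>i'. i - i') ` fst ` Mid. ?a j * ?b (n - j))"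
    using i(3) by (subst sum.reindex) (auto simp: inj_on_def algebra_simps)
  also have "\<dots> = (\<Sum>j\<in>(\<lambda>i'. i - i') ` fst ` Mid \<inter> {j. ?a j \<noteq> 0}. ?a j * ?b (n - j))"
    by (rule sum.mono_neutral_right) (use fin in auto)
  also have "\<dots> \<le> ?c"
    by (rule sum_mono2[OF finite_bracket_support[OF fin(1,2)]]) (use nonneg in auto)
  finally show "nrm (rowblk Rw i) (rowblk Cl i'') (\<lambda>a a''. mmul Mid X Y (i, a) (i'', a'')) \<le> ?c" .
qed

lemma finite_conv_support:
  assumes "finite {i. u i \<noteq> 0}" "finite {i. v i \<noteq> 0}"
  shows "finite {n. conv u v n \<noteq> 0}"
proof (rule finite_subset)
  show "{n. conv u v n \<noteq> 0} \<subseteq> (\<lambda>(x, y). x + y) ` ({i. u i \<noteq> 0} \<times> {i. v i \<noteq> 0})"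
  proof
    fix n assume "n \<in> {n. conv u v n \<noteq> 0}"
    then obtain j where j: "u j \<noteq> 0" "u j * v (n - j) \<noteq> 0"
      unfolding conv_def using sum.not_neutral_contains_not_neutral by blast
    then have "(j, n - j) \<in> {i. u i \<noteq> 0} \<times> {i. v i \<noteq> 0}" by simp
    moreover have "n = (\<lambda>(x, y). x + y) (j, n - j)" by simp
    ultimately show "n \<in> (\<lambda>(x, y). x + y) ` ({i. u i \<noteq> 0} \<times> {i. v i \<noteq> 0})" by blast
  qed
  show "finite ((\<lambda>(x, y). x + y) ` ({i. u i \<noteq> 0} \<times> {i. v i \<noteq> 0}))"
    using assms by simp
qed

lemma sob_norm_mono:
  assumes "K0 \<ge> 0" "finite {i. v i \<noteq> 0}" "\<And>i. cmod (u i) \<le> cmod (v i)"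
  shows "sob_norm K0 s u \<le> sob_norm K0 s v"
proof -
  have supp: "{i. u i \<noteq> 0} \<subseteq> {i. v i \<noteq> 0}"
  proof
    fix i assume "i \<in> {i. u i \<noteq> 0}"
    then show "i \<in> {i. v i \<noteq> 0}" using assms(3)[of i] by auto
  qed
  have "(\<Sum>i\<in>{i. u i \<noteq> 0}. (cmod (u i))\<^sup>2 * jb i powr (2 * s))
      \<le> (\<Sum>i\<in>{i. u i \<noteq> 0}. (cmod (v i))\<^sup>2 * jb i powr (2 * s))"
    using assms(3) by (intro sum_mono mult_right_mono power_mono) auto
  also have "\<dots> \<le> (\<Sum>i\<in>{i. v i \<noteq> 0}. (cmod (v i))\<^sup>2 * jb i powr (2 * s))"
    by (rule sum_mono2[OF assms(2) supp]) simp
  finally show ?thesis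
    unfolding sob_norm_def using assms(1) by (simp add: mult_left_mono)
qed

text \<open>The brackets of a product are dominated by the convolution of the brackets of
  the factors, so the tame product estimate of sobolev_ok applies to them.\<close>

lemma tnorm_mmul_le:
  assumes sob: "sobolev_ok K0 s0 Cs TYPE('b::finite)" and nrm: "is_block_norm nrm"
    and fin: "finite Rw" "finite Mid" "finite Cl"
    and sub: "Rw \<subseteq> UNIV \<times> {0,1}" "Mid \<subseteq> UNIV \<times> {0,1}" "Cl \<subseteq> UNIV \<times> {0,1}" and s: "s \<ge> s0"
  shows "tnorm K0 nrm Rw Cl s (mmul Mid X Y)
     \<le> 1/2 * tnorm K0 nrm Rw Mid s0 X * tnorm K0 nrm Mid Cl s Y
       + Cs s / 2 * tnorm K0 nrm Rw Mid s X * tnorm K0 nrm Mid Cl s0 (Y :: 'b mat)"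
proof -
  let ?a = "bracket nrm Rw Mid X" and ?b = "bracket nrm Mid Cl Y"
  define u where "u n = complex_of_real (?a n)" for n
  define v where "v n = complex_of_real (?b n)" for n
  have supp_u: "{n. u n \<noteq> 0} = {n. ?a n \<noteq> 0}" and supp_v: "{n. v n \<noteq> 0} = {n. ?b n \<noteq> 0}"
    unfolding u_def v_def by simp_all
  have fin_u: "finite {n. u n \<noteq> 0}" and fin_v: "finite {n. v n \<noteq> 0}"
    unfolding supp_u supp_v by (simp_all add: finite_bracket_support fin)
  have conv_uv: "conv u v n = complex_of_real (\<Sum>j\<in>{j. ?a j \<noteq> 0}. ?a j * ?b (n - j))" for n
    unfolding conv_def supp_u by (simp add: u_def v_def)
  have "cmod (complex_of_real (bracket nrm Rw Cl (mmul Mid X Y) n)) \<le> cmod (conv u v n)" for n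
  proof -
    have "bracket nrm Rw Cl (mmul Mid X Y) n \<le> (\<Sum>j\<in>{j. ?a j \<noteq> 0}. ?a j * ?b (n - j))"
      by (rule bracket_mmul_le[OF nrm fin sub])
    also have "\<dots> \<le> cmod (conv u v n)"
      unfolding conv_uv norm_of_real by (rule abs_ge_self)
    finally show ?thesis using bracket_nonneg[OF fin(1,3)] by simp
  qed
  then have "tnorm K0 nrm Rw Cl s (mmul Mid X Y) \<le> sob_norm K0 s (conv u v)"
    unfolding tnorm_eq_sob_norm[OF fin(1,3)]
    using sobolev_ok_K0_pos[OF sob] finite_conv_support[OF fin_u fin_v]
    by (intro sob_norm_mono) simp_all
  also have "\<dots> \<le> 1/2 * sob_norm K0 s0 u * sob_norm K0 s v + Cs s / 2 * sob_norm K0 s u * sob_norm K0 s0 v"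
    by (rule sob_norm_conv_le[OF sob fin_u fin_v s])
  finally show ?thesis
    unfolding u_def v_def tnorm_eq_sob_norm[OF fin(1,2)] tnorm_eq_sob_norm[OF fin(2,3)] .
qed

lemma tnorm_mmul_le_s0:
  assumes "sobolev_ok K0 s0 Cs TYPE('b::finite)" "is_block_norm nrm"
    "finite Rw" "finite Mid" "finite Cl"
    "Rw \<subseteq> UNIV \<times> {0,1}" "Mid \<subseteq> UNIV \<times> {0,1}" "Cl \<subseteq> UNIV \<times> {0,1}"
  shows "tnorm K0 nrm Rw Cl s0 (mmul Mid X Y) \<le> tnorm K0 nrm Rw Mid s0 X * tnorm K0 nrm Mid Cl s0 (Y :: 'b mat)"
  using tnorm_mmul_le[OF assms order.refl, of X Y] sobolev_ok_Cs_s0[OF assms(1)]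
  by (simp add: mult.commute)

section \<open>Vector norms and the operator norm\<close>

text \<open>The contraction argument is run with vnorm at level s0 for part (1) and at
  level 0 (that is, vnorm0) for part (2).\<close>

definition vnorm :: "real \<Rightarrow> blknorm \<Rightarrow> 'b::finite idx set \<Rightarrow> real \<Rightarrow> ('b idx \<Rightarrow> complex) \<Rightarrow> real"
  where "vnorm K0 nrm X s h = tnorm K0 nrm X {(0, 0)} s (\<lambda>k k'. h k)"

lemma vnorm0_eq_vnorm: "vnorm0 K0 nrm X h = vnorm K0 nrm X 0 h"
  unfolding vnorm0_def vnorm_def ..

lemma vnorm_nonneg: "K0 \<ge> 0 \<Longrightarrow> vnorm K0 nrm X s h \<ge> 0"
  unfolding vnorm_def by (rule tnorm_nonneg)

lemma vnorm_cong:
  "is_block_norm nrm \<Longrightarrow> X \<subseteq> UNIV \<times> {0,1} \<Longrightarrow> (\<And>k. k \<in> X \<Longrightarrow> f k = g k) \<Longrightarrow>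
    vnorm K0 nrm X s f = vnorm K0 nrm X s g"
  unfolding vnorm_def by (rule tnorm_cong) auto

lemma vnorm_diff:
  "K0 \<ge> 0 \<Longrightarrow> is_block_norm nrm \<Longrightarrow> finite X \<Longrightarrow> X \<subseteq> UNIV \<times> {0,1} \<Longrightarrow>
    vnorm K0 nrm X s (\<lambda>k. f k - g k) \<le> vnorm K0 nrm X s f + vnorm K0 nrm X s g"
  unfolding vnorm_def by (rule tnorm_diff) auto

lemma vnorm_zero: "is_block_norm nrm \<Longrightarrow> finite X \<Longrightarrow> X \<subseteq> UNIV \<times> {0,1} \<Longrightarrow> vnorm K0 nrm X s (\<lambda>k. 0) = 0"
  unfolding vnorm_def by (rule tnorm_eq_0) auto

lemma vnorm_le_0_imp_eq_0:
  assumes "K0 > 0" "is_block_norm nrm" "finite X" "X \<subseteq> UNIV \<times> {0,1}"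
    and "vnorm K0 nrm X s h \<le> 0" "k \<in> X"
  shows "h k = 0"
  using tnorm_le_0_imp_eq_0[OF assms(1-3) _ assms(4) _ assms(5)[unfolded vnorm_def], of "fst k" "snd k" 0 0]
    assms(6) by simp

lemma vnorm_matvec_le:
  assumes "sobolev_ok K0 s0 Cs TYPE('b::finite)" "is_block_norm nrm" "finite Rw" "finite Cl"
    "Rw \<subseteq> UNIV \<times> {0,1}" "Cl \<subseteq> UNIV \<times> {0,1}"
  shows "vnorm K0 nrm Rw s0 (matvec Cl X h) \<le> tnorm K0 nrm Rw Cl s0 X * vnorm K0 nrm Cl s0 (h :: 'b idx \<Rightarrow> complex)"
  unfolding vnorm_def matvec_eq_mmul by (rule tnorm_mmul_le_s0[OF assms(1-4) _ assms(5,6)]) auto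

lemma vnorm_pos:
  assumes "K0 > 0" "is_block_norm nrm" "finite X" "X \<subseteq> UNIV \<times> {0,1}" "k \<in> X" "h k \<noteq> 0"
  shows "vnorm K0 nrm X s h > 0"
proof (rule ccontr)
  assume "\<not> vnorm K0 nrm X s h > 0"
  then show False using vnorm_le_0_imp_eq_0[OF assms(1-4) _ assms(5), of s h] assms(6) by simp
qed

text \<open>A crude bound, needed only to see that the supremum defining opnorm0 is finite.\<close>

lemma vnorm0_matvec_le:
  assumes sob: "sobolev_ok K0 s0 Cs TYPE('b::finite)" and s0: "s0 \<ge> 0" and nrm: "is_block_norm nrm"
    and fin: "finite Rw" "finite Cl" and sub: "Rw \<subseteq> UNIV \<times> {0,1}" "Cl \<subseteq> UNIV \<times> {0,1}"
  shows "vnorm0 K0 nrm Rw (matvec Cl X h)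
     \<le> tnorm K0 nrm Rw Cl s0 X * sqrt (\<Sum>n\<in>diffset Cl {(0, 0)}. jb n powr (2 * s0))
         * vnorm0 K0 nrm Cl (h :: 'b idx \<Rightarrow> complex)"
proof -
  have K0: "K0 \<ge> 0" using sobolev_ok_K0_pos[OF sob] by simp
  have "vnorm K0 nrm Rw 0 (matvec Cl X h) \<le> vnorm K0 nrm Rw s0 (matvec Cl X h)"
    unfolding vnorm_def by (rule tnorm_mono[OF K0 s0])
  also have "\<dots> \<le> tnorm K0 nrm Rw Cl s0 X * vnorm K0 nrm Cl s0 h"
    by (rule vnorm_matvec_le[OF sob nrm fin sub])
  also have "\<dots> \<le> tnorm K0 nrm Rw Cl s0 X * (sqrt (\<Sum>n\<in>diffset Cl {(0, 0)}. jb n powr (2 * s0)) * vnorm K0 nrm Cl 0 h)"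
    unfolding vnorm_def using K0 fin(2)
    by (intro mult_left_mono tnorm_le_tnorm_0 tnorm_nonneg finite_diffset) auto
  finally show ?thesis unfolding vnorm0_eq_vnorm by (simp add: mult.assoc)
qed

lemma opnorm0_candidate_le:
  assumes "K0 > 0" "is_block_norm nrm" "finite Cl" "Cl \<subseteq> UNIV \<times> {0,1}" "c \<ge> 0"
    and bound: "\<And>h. vnorm0 K0 nrm Rw (matvec Cl X h) \<le> c * vnorm0 K0 nrm Cl h"
    and r: "r \<in> insert 0 {vnorm0 K0 nrm Rw (matvec Cl X h) / vnorm0 K0 nrm Cl h | h. \<exists>k\<in>Cl. h k \<noteq> 0}"
  shows "r \<le> c"
proof -
  from r consider "r = 0"
    | h k where "r = vnorm0 K0 nrm Rw (matvec Cl X h) / vnorm0 K0 nrm Cl h" "k \<in> Cl" "h k \<noteq> 0"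
    by blast
  then show ?thesis
  proof cases
    case 1
    then show ?thesis using assms(5) by simp
  next
    case (2 h k)
    have "vnorm0 K0 nrm Cl h > 0"
      unfolding vnorm0_eq_vnorm by (rule vnorm_pos[where h = h, OF assms(1-4) 2(2,3)])
    then show ?thesis unfolding 2(1) by (simp add: pos_divide_le_eq bound)
  qed
qed

lemma opnorm0_le:
  assumes "K0 > 0" "is_block_norm nrm" "finite Cl" "Cl \<subseteq> UNIV \<times> {0,1}" "c \<ge> 0"
    and "\<And>h. vnorm0 K0 nrm Rw (matvec Cl X h) \<le> c * vnorm0 K0 nrm Cl h"
  shows "opnorm0 K0 nrm Rw Cl X \<le> c"
  unfolding opnorm0_def
proof (rule cSup_least)
  fix r assume "r \<in> insert 0 {vnorm0 K0 nrm Rw (matvec Cl X h) / vnorm0 K0 nrm Cl h | h. \<exists>k\<in>Cl. h k \<noteq> 0}"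
  then show "r \<le> c" by (rule opnorm0_candidate_le[OF assms])
qed simp

lemma
  assumes sob: "sobolev_ok K0 s0 Cs TYPE('b::finite)" and s0: "s0 \<ge> 0" and nrm: "is_block_norm nrm"
    and fin: "finite Rw" "finite Cl" and sub: "Rw \<subseteq> UNIV \<times> {0,1}" "Cl \<subseteq> UNIV \<times> {0,1}"
  shows opnorm0_nonneg: "opnorm0 K0 nrm Rw Cl (X :: 'b mat) \<ge> 0"
    and vnorm0_matvec_le_opnorm0:
      "vnorm0 K0 nrm Rw (matvec Cl X h) \<le> opnorm0 K0 nrm Rw Cl X * vnorm0 K0 nrm Cl h"
proof -
  have K0: "K0 > 0" using sobolev_ok_K0_pos[OF sob] .
  let ?S = "insert 0 {vnorm0 K0 nrm Rw (matvec Cl X h) / vnorm0 K0 nrm Cl h | h. \<exists>k\<in>Cl. h k \<noteq> 0}"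
  define T where "T = tnorm K0 nrm Rw Cl s0 X * sqrt (\<Sum>n\<in>diffset Cl {(0, 0)}. jb n powr (2 * s0))"
  have T: "vnorm0 K0 nrm Rw (matvec Cl X h) \<le> T * vnorm0 K0 nrm Cl h" for h
    unfolding T_def by (rule vnorm0_matvec_le[OF sob s0 nrm fin sub])
  have "T \<ge> 0" unfolding T_def using K0 by (simp add: tnorm_nonneg sum_nonneg)
  have bdd: "bdd_above ?S"
  proof (rule bdd_aboveI)
    fix r assume "r \<in> ?S"
    then show "r \<le> T" by (rule opnorm0_candidate_le[OF K0 nrm fin(2) sub(2) \<open>T \<ge> 0\<close> T])
  qed
  show nonneg: "opnorm0 K0 nrm Rw Cl X \<ge> 0"
    unfolding opnorm0_def by (rule cSup_upper[OF insertI1 bdd])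
  show "vnorm0 K0 nrm Rw (matvec Cl X h) \<le> opnorm0 K0 nrm Rw Cl X * vnorm0 K0 nrm Cl h"
  proof (cases "\<exists>k\<in>Cl. h k \<noteq> 0")
    case True
    then obtain k where k: "k \<in> Cl" "h k \<noteq> 0" by blast
    have "vnorm0 K0 nrm Rw (matvec Cl X h) / vnorm0 K0 nrm Cl h \<le> opnorm0 K0 nrm Rw Cl X"
      unfolding opnorm0_def by (rule cSup_upper[OF _ bdd]) (use True in blast)
    moreover have "vnorm0 K0 nrm Cl h > 0"
      unfolding vnorm0_eq_vnorm by (rule vnorm_pos[where h = h, OF K0 nrm fin(2) sub(2) k])
    ultimately show ?thesis by (simp add: pos_divide_le_eq)
  next
    case False
    then have "vnorm0 K0 nrm Rw (matvec Cl X h) = 0"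
      unfolding vnorm0_eq_vnorm vnorm_def
      by (intro tnorm_eq_0[OF nrm fin(1) _ sub(1)]) (auto simp: matvec_def)
    then show ?thesis
      using nonneg K0 vnorm_nonneg[of K0 nrm Cl 0 h] by (simp add: vnorm0_eq_vnorm)
  qed
qed

section \<open>The perturbation argument\<close>

lemma injective_id_plus_of_contraction:
  assumes K0: "K0 > 0" and nrm: "is_block_norm nrm" and fin: "finite B" and sub: "B \<subseteq> UNIV \<times> {0,1}"
    and "q < 1" and contraction: "\<And>x. vnorm K0 nrm B s (matvec B A x) \<le> q * vnorm K0 nrm B s x"
    and x: "\<forall>k\<in>B. x k + (\<Sum>j\<in>B. A k j * x j) = 0"
  shows "\<forall>k\<in>B. x k = 0"
proof -
  have "vnorm K0 nrm B s x = vnorm K0 nrm B s (\<lambda>k. 0 - matvec B A x k)"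
    using x by (intro vnorm_cong[OF nrm sub]) (simp add: matvec_def eq_neg_iff_add_eq_0)
  also have "\<dots> \<le> vnorm K0 nrm B s (\<lambda>k. 0) + vnorm K0 nrm B s (matvec B A x)"
    using K0 by (intro vnorm_diff[OF _ nrm fin sub]) simp
  also have "\<dots> \<le> q * vnorm K0 nrm B s x"
    using contraction[of x] vnorm_zero[OF nrm fin sub] by simp
  finally have "vnorm K0 nrm B s x \<le> 0"
    using \<open>q < 1\<close> vnorm_nonneg[of K0 nrm B s x] K0 by (simp add: mult_le_cancel_right1)
  then show ?thesis using vnorm_le_0_imp_eq_0[OF K0 nrm fin sub] by blast
qed

lemma perturbed_left_inverse_of_contraction:
  assumes "K0 > 0" "is_block_norm nrm" "finite B" "B \<subseteq> UNIV \<times> {0,1}" "left_inv B C N M" "q < 1"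
    and "\<And>x. vnorm K0 nrm B s (matvec B (mmul C N P) x) \<le> q * vnorm K0 nrm B s x"
  shows "\<exists>NP. left_inv B C NP (\<lambda>k k'. M k k' + P k k')
           \<and> (\<forall>k\<in>B. \<forall>c. NP k c = N k c - mmul C N (mmul B P NP) k c)"
  using perturbed_left_inverse[OF assms(3) assms(5)[unfolded left_inv_iff_mmul]
      injective_id_plus_of_contraction[OF assms(1-4,6,7)]]
  unfolding left_inv_iff_mmul by blast

lemma le_twice_if_le_add_half:
  fixes x a t :: real
  assumes "0 \<le> x" "t \<le> 1/2" "x \<le> a + t * x"
  shows "x \<le> 2 * a"
  using mult_right_mono[OF assms(2,1)] assms(3) by linarith

text \<open>Here xs, ns, ps are the level-s norms of N_P, N, P, while x0, n0, p0 are
  their level-s0 norms and qs, q0 those of P N_P.\<close>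

lemma tame_estimate_arith:
  fixes C n0 p0 x0 ns ps xs qs q0 :: real
  assumes nonneg: "0 \<le> n0" "0 \<le> p0" "0 \<le> ns" "0 \<le> ps"
    and C: "1 \<le> C" and small: "n0 * p0 \<le> 1/2" and x0: "x0 \<le> 2 * n0"
    and xs: "xs \<le> ns + (1/2 * n0 * qs + C/2 * ns * q0)"
    and qs: "qs \<le> 1/2 * p0 * xs + C/2 * ps * x0"
    and q0: "q0 \<le> p0 * x0"
  shows "xs \<le> (1 + 2 * C * n0 * p0) * ns + 2 * C * n0\<^sup>2 * ps"
proof -
  define t where "t = n0 * p0"
  have "n0 * qs \<le> n0 * (1/2 * p0 * xs + C/2 * ps * x0)"
    using qs nonneg(1) by (rule mult_left_mono)
  also have "\<dots> \<le> n0 * (1/2 * p0 * xs + C/2 * ps * (2 * n0))"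
    using x0 nonneg C by (intro mult_left_mono add_left_mono) simp_all
  finally have "n0 * qs \<le> t/2 * xs + C * n0\<^sup>2 * ps"
    unfolding t_def by (simp add: algebra_simps power2_eq_square)
  moreover have "ns * q0 \<le> ns * (p0 * (2 * n0))"
    using q0 mult_left_mono[OF x0 nonneg(2)] nonneg(3) by (intro mult_left_mono) simp_all
  then have "C/2 * ns * q0 \<le> C/2 * (2 * t * ns)"
    using C unfolding t_def by (simp add: mult.assoc mult_left_mono algebra_simps)
  ultimately have "(1 - t/4) * xs \<le> (1 + C * t) * ns + C/2 * n0\<^sup>2 * ps"
    using xs by (simp add: algebra_simps)
  moreover have "(1 + C * t) * ns \<le> (1 - t/4) * ((1 + 2 * C * t) * ns)"
  proof -
    have "t \<ge> 0" unfolding t_def using nonneg by simp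
    then have "(C * t) * t \<le> (C * t) * (1/2)" "1 * t \<le> C * t"
      using C small unfolding t_def by (intro mult_left_mono mult_right_mono; simp)+
    moreover have "(1 - t/4) * (1 + 2 * C * t) = 1 + C * t + (C * t - t/4 - (C * t) * t / 2)"
      by (simp add: algebra_simps)
    ultimately have "1 + C * t \<le> (1 - t/4) * (1 + 2 * C * t)"
      using \<open>t \<ge> 0\<close> by linarith
    from mult_right_mono[OF this nonneg(3)] show ?thesis by (simp only: mult.assoc)
  qed
  moreover have "C/2 * n0\<^sup>2 * ps \<le> (1 - t/4) * (2 * C * n0\<^sup>2 * ps)"
  proof -
    have "1/4 \<le> 1 - t/4" using small unfolding t_def by simp
    from mult_right_mono[OF this, of "2 * C * n0\<^sup>2 * ps"] show ?thesis
      using C nonneg by (simp add: mult_ac)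
  qed
  moreover have "1 - t/4 > 0" using small unfolding t_def by simp
  ultimately have "(1 - t/4) * xs \<le> (1 - t/4) * ((1 + 2 * C * t) * ns + 2 * C * n0\<^sup>2 * ps)"
    by (simp add: distrib_left)
  then show ?thesis
    using \<open>1 - t/4 > 0\<close> unfolding t_def by (simp add: mult.assoc)
qed

lemma tame_constant_le:
  fixes C n0 p0 ns ps :: real
  assumes "n0 * p0 \<le> 1/2" "1 \<le> C" "0 \<le> ns"
  shows "(1 + 2 * C * n0 * p0) * ns + 2 * C * n0\<^sup>2 * ps \<le> 2 * C * (ns + n0\<^sup>2 * ps)"
proof -
  have "C * (n0 * p0) \<le> C * (1/2)" using assms(1,2) by (intro mult_left_mono) simp_all
  moreover have "2 * C * n0 * p0 = 2 * (C * (n0 * p0))" by (simp add: mult_ac)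
  ultimately have "1 + 2 * C * n0 * p0 \<le> 2 * C" using assms(2) by linarith
  from mult_right_mono[OF this assms(3)] show ?thesis by (simp add: algebra_simps)
qed

lemma tnorm_fixed_point_le:
  assumes K0: "K0 \<ge> 0" and nrm: "is_block_norm nrm" and fin: "finite B" "finite C"
    and sub: "B \<subseteq> UNIV \<times> {0,1}" "C \<subseteq> UNIV \<times> {0,1}"
    and fp: "\<forall>k\<in>B. \<forall>c. NP k c = N k c - mmul C N (mmul B P NP) k c"
  shows "tnorm K0 nrm B C s NP \<le> tnorm K0 nrm B C s N + tnorm K0 nrm B C s (mmul C N (mmul B P NP))"
proof -
  have "tnorm K0 nrm B C s NP = tnorm K0 nrm B C s (\<lambda>k c. N k c - mmul C N (mmul B P NP) k c)"
    by (intro tnorm_cong[OF nrm sub]) (use fp in blast)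
  also have "\<dots> \<le> tnorm K0 nrm B C s N + tnorm K0 nrm B C s (mmul C N (mmul B P NP))"
    by (rule tnorm_diff[OF K0 nrm fin sub])
  finally show ?thesis .
qed

lemma tnorm_fixed_point_le_s0:
  fixes B C :: "'b::finite idx set" and N P NP :: "'b mat"
  assumes sob: "sobolev_ok K0 s0 Cs TYPE('b)" and nrm: "is_block_norm nrm"
    and fin: "finite B" "finite C" and sub: "B \<subseteq> UNIV \<times> {0,1}" "C \<subseteq> UNIV \<times> {0,1}"
    and small: "tnorm K0 nrm B C s0 N * tnorm K0 nrm C B s0 P \<le> 1/2"
    and fp: "\<forall>k\<in>B. \<forall>c. NP k c = N k c - mmul C N (mmul B P NP) k c"
  shows "tnorm K0 nrm B C s0 NP \<le> 2 * tnorm K0 nrm B C s0 N"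
proof (rule le_twice_if_le_add_half)
  have K0: "K0 \<ge> 0" using sobolev_ok_K0_pos[OF sob] by simp
  then show "0 \<le> tnorm K0 nrm B C s0 NP" by (rule tnorm_nonneg)
  have "tnorm K0 nrm B C s0 (mmul C N (mmul B P NP))
      \<le> tnorm K0 nrm B C s0 N * tnorm K0 nrm C C s0 (mmul B P NP)"
    by (rule tnorm_mmul_le_s0[OF sob nrm fin(1,2,2) sub(1,2,2)])
  also have "\<dots> \<le> tnorm K0 nrm B C s0 N * (tnorm K0 nrm C B s0 P * tnorm K0 nrm B C s0 NP)"
    using K0 by (intro mult_left_mono tnorm_mmul_le_s0[OF sob nrm fin(2,1,2) sub(2,1,2)] tnorm_nonneg)
  finally show "tnorm K0 nrm B C s0 NP
      \<le> tnorm K0 nrm B C s0 N + tnorm K0 nrm B C s0 N * tnorm K0 nrm C B s0 P * tnorm K0 nrm B C s0 NP"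
    using tnorm_fixed_point_le[OF K0 nrm fin sub fp, of s0] by (simp add: mult.assoc)
qed (rule small)

lemma tnorm_fixed_point_le_tame:
  fixes B C :: "'b::finite idx set" and N P NP :: "'b mat"
  assumes sob: "sobolev_ok K0 s0 Cs TYPE('b)" and nrm: "is_block_norm nrm"
    and fin: "finite B" "finite C" and sub: "B \<subseteq> UNIV \<times> {0,1}" "C \<subseteq> UNIV \<times> {0,1}"
    and small: "tnorm K0 nrm B C s0 N * tnorm K0 nrm C B s0 P \<le> 1/2"
    and fp: "\<forall>k\<in>B. \<forall>c. NP k c = N k c - mmul C N (mmul B P NP) k c"
    and s: "s \<ge> s0"
  shows "tnorm K0 nrm B C s NP
      \<le> (1 + 2 * Cs s * tnorm K0 nrm B C s0 N * tnorm K0 nrm C B s0 P) * tnorm K0 nrm B C s N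
        + 2 * Cs s * (tnorm K0 nrm B C s0 N)\<^sup>2 * tnorm K0 nrm C B s P"
proof -
  have K0: "K0 \<ge> 0" using sobolev_ok_K0_pos[OF sob] by simp
  let ?Q = "mmul B P NP"
  show ?thesis
  proof (rule tame_estimate_arith)
    show "0 \<le> tnorm K0 nrm B C s0 N" "0 \<le> tnorm K0 nrm C B s0 P"
      "0 \<le> tnorm K0 nrm B C s N" "0 \<le> tnorm K0 nrm C B s P"
      using K0 by (simp_all add: tnorm_nonneg)
    show "1 \<le> Cs s" by (rule sobolev_ok_Cs_ge_1[OF sob s])
    show "tnorm K0 nrm B C s0 NP \<le> 2 * tnorm K0 nrm B C s0 N"
      by (rule tnorm_fixed_point_le_s0[OF sob nrm fin sub small fp])
    show "tnorm K0 nrm B C s NP \<le> tnorm K0 nrm B C s N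
        + (1/2 * tnorm K0 nrm B C s0 N * tnorm K0 nrm C C s ?Q
           + Cs s / 2 * tnorm K0 nrm B C s N * tnorm K0 nrm C C s0 ?Q)"
      using tnorm_fixed_point_le[OF K0 nrm fin sub fp, of s]
        tnorm_mmul_le[OF sob nrm fin(1,2,2) sub(1,2,2) s, of N ?Q]
      by simp
    show "tnorm K0 nrm C C s ?Q
        \<le> 1/2 * tnorm K0 nrm C B s0 P * tnorm K0 nrm B C s NP
          + Cs s / 2 * tnorm K0 nrm C B s P * tnorm K0 nrm B C s0 NP"
      by (rule tnorm_mmul_le[OF sob nrm fin(2,1,2) sub(2,1,2) s])
    show "tnorm K0 nrm C C s0 ?Q \<le> tnorm K0 nrm C B s0 P * tnorm K0 nrm B C s0 NP"
      by (rule tnorm_mmul_le_s0[OF sob nrm fin(2,1,2) sub(2,1,2)])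
  qed (rule small)
qed

lemma opnorm0_fixed_point_le:
  fixes B C :: "'b::finite idx set" and N P NP :: "'b mat"
  assumes sob: "sobolev_ok K0 s0 Cs TYPE('b)" and s0: "s0 \<ge> 0" and nrm: "is_block_norm nrm"
    and fin: "finite B" "finite C" and sub: "B \<subseteq> UNIV \<times> {0,1}" "C \<subseteq> UNIV \<times> {0,1}"
    and small: "opnorm0 K0 nrm B C N * opnorm0 K0 nrm C B P \<le> 1/2"
    and fp: "\<forall>k\<in>B. \<forall>c. NP k c = N k c - mmul C N (mmul B P NP) k c"
  shows "opnorm0 K0 nrm B C NP \<le> 2 * opnorm0 K0 nrm B C N"
proof (rule opnorm0_le[OF sobolev_ok_K0_pos[OF sob] nrm fin(2) sub(2)])
  have K0: "K0 \<ge> 0" using sobolev_ok_K0_pos[OF sob] by simp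
  let ?LN = "opnorm0 K0 nrm B C N" and ?LP = "opnorm0 K0 nrm C B P"
  have LN: "?LN \<ge> 0" "\<And>h. vnorm0 K0 nrm B (matvec C N h) \<le> ?LN * vnorm0 K0 nrm C h"
    by (rule opnorm0_nonneg[OF sob s0 nrm fin sub], rule vnorm0_matvec_le_opnorm0[OF sob s0 nrm fin sub])
  have LP: "\<And>h. vnorm0 K0 nrm C (matvec B P h) \<le> ?LP * vnorm0 K0 nrm B h"
    by (rule vnorm0_matvec_le_opnorm0[OF sob s0 nrm fin(2,1) sub(2,1)])
  show "0 \<le> 2 * ?LN" using LN(1) by simp
  fix h
  let ?z = "matvec C NP h"
  have "?z k = matvec C N h k - matvec C N (matvec B P ?z) k" if "k \<in> B" for k
  proof -
    have "NP k c = N k c - mmul C N (mmul B P NP) k c" for c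
      using fp that by blast
    then have "?z k = matvec C N h k - matvec C (mmul C N (mmul B P NP)) h k"
      by (simp add: matvec_def left_diff_distrib sum_subtractf)
    then show ?thesis by (simp only: matvec_mmul)
  qed
  then have "vnorm0 K0 nrm B ?z = vnorm0 K0 nrm B (\<lambda>k. matvec C N h k - matvec C N (matvec B P ?z) k)"
    unfolding vnorm0_eq_vnorm by (rule vnorm_cong[OF nrm sub(1)])
  also have "\<dots> \<le> vnorm0 K0 nrm B (matvec C N h) + vnorm0 K0 nrm B (matvec C N (matvec B P ?z))"
    unfolding vnorm0_eq_vnorm by (rule vnorm_diff[OF K0 nrm fin(1) sub(1)])
  also have "\<dots> \<le> ?LN * vnorm0 K0 nrm C h + ?LN * (?LP * vnorm0 K0 nrm B ?z)"
    using LN mult_left_mono[OF LP LN(1)] by (meson add_mono order_trans)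
  finally have "vnorm0 K0 nrm B ?z \<le> ?LN * vnorm0 K0 nrm C h + ?LN * ?LP * vnorm0 K0 nrm B ?z"
    by (simp add: mult.assoc)
  moreover have "0 \<le> vnorm0 K0 nrm B ?z"
    unfolding vnorm0_eq_vnorm by (rule vnorm_nonneg[OF K0])
  ultimately show "vnorm0 K0 nrm B ?z \<le> 2 * ?LN * vnorm0 K0 nrm C h"
    using le_twice_if_le_add_half[OF _ small] by (simp add: mult.assoc)
qed

lemma tnorm_perturbed_left_inverse:
  fixes B C :: "'b::finite idx set" and M N P :: "'b mat"
  assumes sob: "sobolev_ok K0 s0 Cs TYPE('b)" and nrm: "is_block_norm nrm"
    and fin: "finite B" "finite C" and sub: "B \<subseteq> UNIV \<times> {0,1}" "C \<subseteq> UNIV \<times> {0,1}"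
    and N: "left_inv B C N M"
    and small: "tnorm K0 nrm B C s0 N * tnorm K0 nrm C B s0 P \<le> 1/2"
  shows "\<exists>NP. left_inv B C NP (\<lambda>k k'. M k k' + P k k') \<and>
           tnorm K0 nrm B C s0 NP \<le> 2 * tnorm K0 nrm B C s0 N \<and>
           (\<forall>s\<ge>s0.
              tnorm K0 nrm B C s NP
                \<le> (1 + 2 * Cs s * tnorm K0 nrm B C s0 N * tnorm K0 nrm C B s0 P) * tnorm K0 nrm B C s N
                  + 2 * Cs s * (tnorm K0 nrm B C s0 N)\<^sup>2 * tnorm K0 nrm C B s P \<and>
              (1 + 2 * Cs s * tnorm K0 nrm B C s0 N * tnorm K0 nrm C B s0 P) * tnorm K0 nrm B C s N
                  + 2 * Cs s * (tnorm K0 nrm B C s0 N)\<^sup>2 * tnorm K0 nrm C B s P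
                \<le> 2 * Cs s * (tnorm K0 nrm B C s N + (tnorm K0 nrm B C s0 N)\<^sup>2 * tnorm K0 nrm C B s P))"
proof -
  have K0: "K0 > 0" using sobolev_ok_K0_pos[OF sob] .
  have "vnorm K0 nrm B s0 (matvec B (mmul C N P) x)
      \<le> tnorm K0 nrm B C s0 N * tnorm K0 nrm C B s0 P * vnorm K0 nrm B s0 x" for x
  proof -
    have "vnorm K0 nrm B s0 (matvec B (mmul C N P) x) \<le> tnorm K0 nrm B B s0 (mmul C N P) * vnorm K0 nrm B s0 x"
      by (rule vnorm_matvec_le[OF sob nrm fin(1,1) sub(1,1)])
    also have "\<dots> \<le> tnorm K0 nrm B C s0 N * tnorm K0 nrm C B s0 P * vnorm K0 nrm B s0 x"
      using K0 by (intro mult_right_mono tnorm_mmul_le_s0[OF sob nrm fin(1,2,1) sub(1,2,1)] vnorm_nonneg) simp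
    finally show ?thesis .
  qed
  moreover have "tnorm K0 nrm B C s0 N * tnorm K0 nrm C B s0 P < 1" using small by simp
  ultimately obtain NP where NP: "left_inv B C NP (\<lambda>k k'. M k k' + P k k')"
      and fp: "\<forall>k\<in>B. \<forall>c. NP k c = N k c - mmul C N (mmul B P NP) k c"
    using perturbed_left_inverse_of_contraction[OF K0 nrm fin(1) sub(1) N] by blast
  have "0 \<le> tnorm K0 nrm B C s N" for s using K0 by (simp add: tnorm_nonneg)
  then show ?thesis
    using NP tnorm_fixed_point_le_s0[OF sob nrm fin sub small fp]
      tnorm_fixed_point_le_tame[OF sob nrm fin sub small fp]
      tame_constant_le[OF small sobolev_ok_Cs_ge_1[OF sob]]
    by blast
qed

lemma opnorm0_perturbed_left_inverse:
  fixes B C :: "'b::finite idx set" and M N P :: "'b mat"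
  assumes sob: "sobolev_ok K0 s0 Cs TYPE('b)" and s0: "s0 \<ge> 0" and nrm: "is_block_norm nrm"
    and fin: "finite B" "finite C" and sub: "B \<subseteq> UNIV \<times> {0,1}" "C \<subseteq> UNIV \<times> {0,1}"
    and N: "left_inv B C N M"
    and small: "opnorm0 K0 nrm B C N * opnorm0 K0 nrm C B P \<le> 1/2"
  shows "\<exists>NP. left_inv B C NP (\<lambda>k k'. M k k' + P k k') \<and>
           opnorm0 K0 nrm B C NP \<le> 2 * opnorm0 K0 nrm B C N"
proof -
  have K0: "K0 > 0" using sobolev_ok_K0_pos[OF sob] .
  have "vnorm K0 nrm B 0 (matvec B (mmul C N P) x)
      \<le> opnorm0 K0 nrm B C N * opnorm0 K0 nrm C B P * vnorm K0 nrm B 0 x" for x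
  proof -
    have "vnorm0 K0 nrm B (matvec C N (matvec B P x))
        \<le> opnorm0 K0 nrm B C N * vnorm0 K0 nrm C (matvec B P x)"
      by (rule vnorm0_matvec_le_opnorm0[OF sob s0 nrm fin sub])
    also have "\<dots> \<le> opnorm0 K0 nrm B C N * (opnorm0 K0 nrm C B P * vnorm0 K0 nrm B x)"
      by (intro mult_left_mono vnorm0_matvec_le_opnorm0[OF sob s0 nrm fin(2,1) sub(2,1)]
          opnorm0_nonneg[OF sob s0 nrm fin sub])
    finally show ?thesis by (simp add: matvec_mmul vnorm0_eq_vnorm mult.assoc)
  qed
  moreover have "opnorm0 K0 nrm B C N * opnorm0 K0 nrm C B P < 1" using small by simp
  ultimately obtain NP where NP: "left_inv B C NP (\<lambda>k k'. M k k' + P k k')"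
      and fp: "\<forall>k\<in>B. \<forall>c. NP k c = N k c - mmul C N (mmul B P NP) k c"
    using perturbed_left_inverse_of_contraction[OF K0 nrm fin(1) sub(1) N] by blast
  then show ?thesis
    using opnorm0_fixed_point_le[OF sob s0 nrm fin sub small fp] by blast
qed

theorem lemma3p9:
  fixes K0 s0 :: real and Cs :: "real \<Rightarrow> real" and nrm :: blknorm
  assumes b_ge: "CARD('b::finite) \<ge> 2"
    and s0_gt: "s0 > real CARD('b) / 2"
    and sob: "sobolev_ok K0 s0 Cs TYPE('b)"
    and nrm: "is_block_norm nrm"
  shows "\<exists>Cf :: real \<Rightarrow> real. \<forall>(B :: 'b idx set) (C :: 'b idx set) (M :: 'b mat) (N :: 'b mat).
     finite B \<longrightarrow> finite C \<longrightarrow> B \<subseteq> UNIV \<times> {0, 1} \<longrightarrow> C \<subseteq> UNIV \<times> {0, 1} \<longrightarrow>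
     left_inv B C N M \<longrightarrow>
     (\<forall>P :: 'b mat.
        tnorm K0 nrm B C s0 N * tnorm K0 nrm C B s0 P \<le> 1/2 \<longrightarrow>
        (\<exists>NP :: 'b mat. left_inv B C NP (\<lambda>k k'. M k k' + P k k') \<and>
           tnorm K0 nrm B C s0 NP \<le> 2 * tnorm K0 nrm B C s0 N \<and>
           (\<forall>s\<ge>s0.
              tnorm K0 nrm B C s NP
                \<le> (1 + Cf s * tnorm K0 nrm B C s0 N * tnorm K0 nrm C B s0 P) * tnorm K0 nrm B C s N
                  + Cf s * (tnorm K0 nrm B C s0 N)\<^sup>2 * tnorm K0 nrm C B s P \<and>
              (1 + Cf s * tnorm K0 nrm B C s0 N * tnorm K0 nrm C B s0 P) * tnorm K0 nrm B C s N
                  + Cf s * (tnorm K0 nrm B C s0 N)\<^sup>2 * tnorm K0 nrm C B s P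
                \<le> Cf s * (tnorm K0 nrm B C s N + (tnorm K0 nrm B C s0 N)\<^sup>2 * tnorm K0 nrm C B s P)))) \<and>
     (\<forall>P :: 'b mat.
        opnorm0 K0 nrm B C N * opnorm0 K0 nrm C B P \<le> 1/2 \<longrightarrow>
        (\<exists>NP :: 'b mat. left_inv B C NP (\<lambda>k k'. M k k' + P k k') \<and>
           opnorm0 K0 nrm B C NP \<le> 2 * opnorm0 K0 nrm B C N))"
proof -
  have s0: "s0 \<ge> 0" using s0_gt by (smt (verit) of_nat_0_le_iff divide_nonneg_pos)
  show ?thesis
    by (intro exI[of _ "\<lambda>s. 2 * Cs s"] allI impI conjI
        tnorm_perturbed_left_inverse[OF sob nrm] opnorm0_perturbed_left_inverse[OF sob s0 nrm])
qed

end
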